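(* Let $S=\{1,\dots,k\}$ with $k\ge3$ and $c\in\mathbb{R}_+$. Then $\Phi(B_c)=P_c$, $\Psi(P_c)\subseteq B_c$, $\Phi(\overline B_c)=\overline P_c$, and $\Psi(\overline P_c)\subseteq\overline B_c$.
   Context: $S^\pm=S\times\{\pm1\}$ with $i^\pm=(i,\pm1)$, $S^+=\{i^+:i\in S\}$, $S^-=\{i^-:i\in S\}$; for a vector $x$ and a set $X$, $x(X)=\sum_{u\in X}x(u)$. $\Phi:\mathbb{R}^{S^\pm}\to\mathbb{R}^S$, $\Phi(x)(i)=(x(i^+)-x(i^-))/2$; $\Psi:\mathbb{R}^S\to\mathbb{R}^{S^\pm}$, $\Psi(z)(i^+)=z(i)$, $\Psi(z)(i^-)=-z(i)$. $P_c$ is the set of $z\in\mathbb{R}_+^S$ with $z(S)\le2c$ and $z(t)\le z(S\setminus\{t\})$ for all $t\in S$; $\overline P_c$ is the same with $z(S)=2c$ instead of $z(S)\le 2c$. $B_c$ is the set of $x\in\mathbb{R}^{S^\pm}$ with $x(S^\pm)=0$, $x(S^+)\le 2c$, $x(i^+)+x(S^-\setminus\{i^-\})\le0$ for all $i\in S$, $0\le x(i^+)\le c$ and $-c\le x(i^-)\le 0$ for all $i\in S$; $\overline B_c$ is the set of $x\in B_c$ with additionally $x(S^-)\le -2c$. *)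

theory Defs
  imports "HOL-Analysis.Analysis"
begin

text \<open>Signed copies S^pm = S x {1,-1}, where (i,1) is i^+ and (i,-1) is i^-.
  Vectors in R^S are functions nat => real vanishing outside S; vectors in R^{S^pm}
  are functions nat * int => real vanishing outside S^pm.\<close>

definition Spm :: "nat set \<Rightarrow> (nat \<times> int) set" where
  "Spm S = S \<times> {1, -1}"

definition Splus :: "nat set \<Rightarrow> (nat \<times> int) set" where
  "Splus S = S \<times> {1}"

definition Sminus :: "nat set \<Rightarrow> (nat \<times> int) set" where
  "Sminus S = S \<times> {-1}"

definition vecS :: "nat set \<Rightarrow> (nat \<Rightarrow> real) set" where
  "vecS S = {z. \<forall>i. i \<notin> S \<longrightarrow> z i = 0}"

definition vecSpm :: "nat set \<Rightarrow> (nat \<times> int \<Rightarrow> real) set" where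
  "vecSpm S = {x. \<forall>u. u \<notin> Spm S \<longrightarrow> x u = 0}"

definition Phi :: "nat set \<Rightarrow> (nat \<times> int \<Rightarrow> real) \<Rightarrow> (nat \<Rightarrow> real)" where
  "Phi S x = (\<lambda>i. if i \<in> S then (x (i, 1) - x (i, -1)) / 2 else 0)"

definition Psi :: "nat set \<Rightarrow> (nat \<Rightarrow> real) \<Rightarrow> (nat \<times> int \<Rightarrow> real)" where
  "Psi S z = (\<lambda>(i, s). if i \<in> S \<and> s = 1 then z i
                        else if i \<in> S \<and> s = -1 then - z i else 0)"

definition Pc :: "nat set \<Rightarrow> real \<Rightarrow> (nat \<Rightarrow> real) set" where
  "Pc S c = {z \<in> vecS S. (\<forall>i\<in>S. z i \<ge> 0) \<and> sum z S \<le> 2 * c \<and>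
                        (\<forall>t\<in>S. z t \<le> sum z (S - {t}))}"

definition Pc_bar :: "nat set \<Rightarrow> real \<Rightarrow> (nat \<Rightarrow> real) set" where
  "Pc_bar S c = {z \<in> vecS S. (\<forall>i\<in>S. z i \<ge> 0) \<and> sum z S = 2 * c \<and>
                        (\<forall>t\<in>S. z t \<le> sum z (S - {t}))}"

definition Bc :: "nat set \<Rightarrow> real \<Rightarrow> (nat \<times> int \<Rightarrow> real) set" where
  "Bc S c = {x \<in> vecSpm S. sum x (Spm S) = 0 \<and> sum x (Splus S) \<le> 2 * c \<and>
       (\<forall>i\<in>S. x (i, 1) + sum x (Sminus S - {(i, -1)}) \<le> 0) \<and>
       (\<forall>i\<in>S. 0 \<le> x (i, 1) \<and> x (i, 1) \<le> c) \<and>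
       (\<forall>i\<in>S. - c \<le> x (i, -1) \<and> x (i, -1) \<le> 0)}"

definition Bc_bar :: "nat set \<Rightarrow> real \<Rightarrow> (nat \<times> int \<Rightarrow> real) set" where
  "Bc_bar S c = {x \<in> Bc S c. sum x (Sminus S) \<le> - 2 * c}"

end

theory Submission
  imports Defs
begin

text \<open>Write \<open>p i = x(i\<^sup>+)\<close> and \<open>m i = x(i\<^sup>-)\<close>. For \<open>x \<in> B\<^sub>c\<close> the condition \<open>x(S\<^sup>\<plusminus>) = 0\<close>
  gives \<open>p(S) = -m(S)\<close>, so \<open>\<Phi>(x)(S) = p(S)\<close> and the inequality
  \<open>x(t\<^sup>+) + x(S\<^sup>- - {t\<^sup>-}) \<le> 0\<close> is exactly \<open>\<Phi>(x)(t) \<le> \<Phi>(x)(S - {t})\<close>.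
  Conversely \<open>\<Psi>\<close> is a right inverse of \<open>\<Phi>\<close> mapping \<open>P\<^sub>c\<close> into \<open>B\<^sub>c\<close>; the bound
  \<open>z(i) \<le> c\<close> needed there follows from \<open>2 z(i) \<le> z(S) \<le> 2c\<close>.\<close>

lemma sum_Spm:
  assumes "finite S"
  shows "sum x (Spm S) = (\<Sum>i\<in>S. x (i, 1)) + (\<Sum>i\<in>S. x (i, -1))"
proof -
  have "sum x (Spm S) = (\<Sum>i\<in>S. \<Sum>s\<in>{1, -1}. x (i, s))"
    unfolding Spm_def using sum.cartesian_product[of "\<lambda>i s. x (i, s)" "{1, -1}" S] by simp
  also have "\<dots> = (\<Sum>i\<in>S. x (i, 1) + x (i, -1))" by simp
  finally show ?thesis by (simp add: sum.distrib)
qed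

lemma sum_Splus: "sum x (Splus S) = (\<Sum>i\<in>S. x (i, 1))"
proof -
  have "Splus S = (\<lambda>i. (i, 1)) ` S" unfolding Splus_def by auto
  then show ?thesis by (simp add: sum.reindex inj_on_def)
qed

lemma sum_Sminus: "sum x (Sminus S) = (\<Sum>i\<in>S. x (i, -1))"
proof -
  have "Sminus S = (\<lambda>i. (i, -1)) ` S" unfolding Sminus_def by auto
  then show ?thesis by (simp add: sum.reindex inj_on_def)
qed

lemma sum_Sminus_remove: "sum x (Sminus S - {(i, -1)}) = (\<Sum>j\<in>S - {i}. x (j, -1))"
proof -
  have "Sminus S - {(i, -1)} = Sminus (S - {i})" unfolding Sminus_def by auto
  then show ?thesis by (simp add: sum_Sminus)
qed

lemma sum_Phi:
  assumes "T \<subseteq> S"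
  shows "sum (Phi S x) T = ((\<Sum>i\<in>T. x (i, 1)) - (\<Sum>i\<in>T. x (i, -1))) / 2"
proof -
  have "sum (Phi S x) T = (\<Sum>i\<in>T. (x (i, 1) - x (i, -1)) / 2)"
    using assms by (intro sum.cong) (auto simp: Phi_def)
  then show ?thesis by (simp add: sum_divide_distrib[symmetric] sum_subtractf)
qed

lemma Phi_in_Pc:
  assumes "finite S" and x: "x \<in> Bc S c"
  shows "Phi S x \<in> Pc S c"
    and "sum (Phi S x) S = (\<Sum>i\<in>S. x (i, 1))"
proof -
  let ?p = "\<lambda>i. x (i, 1)" and ?m = "\<lambda>i. x (i, -1)"
  have balanced: "sum ?p S + sum ?m S = 0"
    and plus_le: "sum ?p S \<le> 2 * c"
    and triangle: "\<And>t. t \<in> S \<Longrightarrow> ?p t + (\<Sum>j\<in>S - {t}. ?m j) \<le> 0"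
    and p_nonneg: "\<And>i. i \<in> S \<Longrightarrow> 0 \<le> ?p i"
    and m_nonpos: "\<And>i. i \<in> S \<Longrightarrow> ?m i \<le> 0"
    using x \<open>finite S\<close> unfolding Bc_def by (auto simp: sum_Spm sum_Splus sum_Sminus_remove)
  show total: "sum (Phi S x) S = sum ?p S"
    using sum_Phi[of S S x] balanced by simp
  show "Phi S x \<in> Pc S c"
    unfolding Pc_def vecS_def
  proof (intro CollectI conjI ballI allI impI)
    fix i assume "i \<in> S"
    then show "0 \<le> Phi S x i" using p_nonneg[of i] m_nonpos[of i] by (simp add: Phi_def)
  next
    show "sum (Phi S x) S \<le> 2 * c" using total plus_le by simp
  next
    fix t assume t: "t \<in> S"
    have "sum (Phi S x) (S - {t}) = (sum ?p S - ?p t - (sum ?m S - ?m t)) / 2"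
      using sum_Phi[of "S - {t}" S x] \<open>finite S\<close> t by (simp add: sum_diff1)
    moreover have "(\<Sum>j\<in>S - {t}. ?m j) = sum ?m S - ?m t"
      using \<open>finite S\<close> t by (simp add: sum_diff1)
    ultimately show "Phi S x t \<le> sum (Phi S x) (S - {t})"
      using triangle[OF t] balanced t by (simp add: Phi_def)
  qed (simp add: Phi_def)
qed

lemma Phi_in_Pc_bar:
  assumes "finite S" and x: "x \<in> Bc_bar S c"
  shows "Phi S x \<in> Pc_bar S c"
proof -
  have "x \<in> Bc S c" using x unfolding Bc_bar_def by simp
  then have "Phi S x \<in> Pc S c" and total: "sum (Phi S x) S = (\<Sum>i\<in>S. x (i, 1))"
    using Phi_in_Pc \<open>finite S\<close> by auto
  moreover have "(\<Sum>i\<in>S. x (i, 1)) = 2 * c"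
    using x \<open>finite S\<close> unfolding Bc_bar_def Bc_def by (auto simp: sum_Spm sum_Splus sum_Sminus)
  ultimately show ?thesis unfolding Pc_def Pc_bar_def by auto
qed

lemma Pc_le:
  assumes "finite S" and z: "z \<in> Pc S c" and "i \<in> S"
  shows "z i \<le> c"
proof -
  have "z i \<le> sum z S - z i" and "sum z S \<le> 2 * c"
    using z \<open>finite S\<close> \<open>i \<in> S\<close> unfolding Pc_def by (auto simp: sum_diff1)
  then show ?thesis by simp
qed

lemma sum_Psi_plus: "T \<subseteq> S \<Longrightarrow> (\<Sum>i\<in>T. Psi S z (i, 1)) = sum z T"
  by (intro sum.cong) (auto simp: Psi_def)

lemma sum_Psi_minus: "T \<subseteq> S \<Longrightarrow> (\<Sum>i\<in>T. Psi S z (i, -1)) = - sum z T"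
  by (simp add: sum_negf[symmetric], intro sum.cong) (auto simp: Psi_def)

lemma Phi_Psi: "z \<in> vecS S \<Longrightarrow> Phi S (Psi S z) = z"
  by (rule ext) (auto simp: Phi_def Psi_def vecS_def)

lemma Psi_in_Bc:
  assumes "finite S" and z: "z \<in> Pc S c"
  shows "Psi S z \<in> Bc S c"
  unfolding Bc_def vecSpm_def
proof (intro CollectI conjI ballI allI impI)
  fix u assume "u \<notin> Spm S"
  then show "Psi S z u = 0" by (cases u) (auto simp: Psi_def Spm_def)
next
  show "sum (Psi S z) (Spm S) = 0"
    using \<open>finite S\<close> by (simp add: sum_Spm sum_Psi_plus sum_Psi_minus)
next
  show "sum (Psi S z) (Splus S) \<le> 2 * c"
    using z by (simp add: sum_Splus sum_Psi_plus Pc_def)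
next
  fix i assume i: "i \<in> S"
  then show "Psi S z (i, 1) + sum (Psi S z) (Sminus S - {(i, -1)}) \<le> 0"
    using z by (simp add: sum_Sminus_remove sum_Psi_minus) (simp add: Psi_def Pc_def)
qed (use z Pc_le[OF \<open>finite S\<close> z] in \<open>auto simp: Psi_def Pc_def\<close>)

lemma Psi_in_Bc_bar:
  assumes "finite S" and z: "z \<in> Pc_bar S c"
  shows "Psi S z \<in> Bc_bar S c"
proof -
  have "z \<in> Pc S c" using z unfolding Pc_def Pc_bar_def by auto
  then have "Psi S z \<in> Bc S c" using Psi_in_Bc \<open>finite S\<close> by blast
  moreover have "sum z S = 2 * c" using z unfolding Pc_bar_def by auto
  ultimately show ?thesis unfolding Bc_bar_def by (simp add: sum_Sminus sum_Psi_minus)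
qed

lemma image_eq_if_right_inverse:
  assumes "f ` A \<subseteq> B" and "g ` B \<subseteq> A" and "\<And>y. y \<in> B \<Longrightarrow> f (g y) = y"
  shows "f ` A = B"
  using assms by (force intro: image_eqI)

theorem lemma4p1:
  fixes k :: nat and c :: real
  assumes "k \<ge> 3" and "c \<ge> 0"
  defines "S \<equiv> {1..k}"
  shows "Phi S ` Bc S c = Pc S c \<and> Psi S ` Pc S c \<subseteq> Bc S c \<and>
         Phi S ` Bc_bar S c = Pc_bar S c \<and> Psi S ` Pc_bar S c \<subseteq> Bc_bar S c"
proof -
  have "finite S" unfolding S_def by simp
  have Psi_Pc: "Psi S ` Pc S c \<subseteq> Bc S c"
    using Psi_in_Bc[OF \<open>finite S\<close>] by blast
  have Psi_Pc_bar: "Psi S ` Pc_bar S c \<subseteq> Bc_bar S c"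
    using Psi_in_Bc_bar[OF \<open>finite S\<close>] by blast
  have Phi_Psi_Pc: "Phi S (Psi S z) = z" if "z \<in> Pc S c \<or> z \<in> Pc_bar S c" for z
    using that Phi_Psi unfolding Pc_def Pc_bar_def by blast
  have "Phi S ` Bc S c = Pc S c"
    using Phi_in_Pc(1)[OF \<open>finite S\<close>] Psi_Pc Phi_Psi_Pc
    by (intro image_eq_if_right_inverse) auto
  moreover have "Phi S ` Bc_bar S c = Pc_bar S c"
    using Phi_in_Pc_bar[OF \<open>finite S\<close>] Psi_Pc_bar Phi_Psi_Pc
    by (intro image_eq_if_right_inverse) auto
  ultimately show ?thesis using Psi_Pc Psi_Pc_bar by blast
qed

end
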